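(* Let $a>1$, $n\geq1$, $C_j(n,a)=\binom{n}{j}\left(\frac{1+a}{2}\right)^{n-j}\left(\frac{1-a}{2}\right)^j$, $w_j=-i(1-\frac{2j}{n})$, and $\sigma_n(x)=\sum_{j=0}^nC_j(n,a)A_{w_j}(x)$. Then $\sigma_n\in L^2(\mathbb{R})$ and for every $z\in\mathbb{C}$, $$F_n(z,a):=\sum_{j=0}^nC_j(n,a)e^{iz(1-\frac{2j}{n})}=\pi^{-1/4}\int_{\mathbb{R}}e^{-\frac12(z^2+x^2)+\sqrt2zx}\sigma_n(x)\,dx.$$
   Context: The Bargmann kernel is $A_w(x)=\pi^{-1/4}e^{-\frac12(\bar w^2+x^2)+\sqrt2\bar wx}$ for $w\in\mathbb{C}$, $x\in\mathbb{R}$. *)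

theory Defs
  imports "HOL-Analysis.Analysis"
begin

definition bargmann_kernel :: "complex \<Rightarrow> real \<Rightarrow> complex" where
  "bargmann_kernel w x =
     complex_of_real (pi powr (-1/4)) *
     exp (- (cnj w ^ 2 + complex_of_real x ^ 2) / 2 + complex_of_real (sqrt 2) * cnj w * complex_of_real x)"

definition coeffC :: "nat \<Rightarrow> real \<Rightarrow> nat \<Rightarrow> real" where
  "coeffC n a j = real (n choose j) * ((1 + a) / 2) ^ (n - j) * ((1 - a) / 2) ^ j"

definition wpt :: "nat \<Rightarrow> nat \<Rightarrow> complex" where
  "wpt n j = - \<i> * complex_of_real (1 - 2 * real j / real n)"

definition sigma_n :: "nat \<Rightarrow> real \<Rightarrow> real \<Rightarrow> complex" where
  "sigma_n n a x = (\<Sum>j=0..n. complex_of_real (coeffC n a j) * bargmann_kernel (wpt n j) x)"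

definition F_n :: "nat \<Rightarrow> complex \<Rightarrow> real \<Rightarrow> complex" where
  "F_n n z a = (\<Sum>j=0..n. complex_of_real (coeffC n a j) *
                 exp (\<i> * z * complex_of_real (1 - 2 * real j / real n)))"

end

theory Submission
  imports Defs "HOL-Probability.Characteristic_Functions"
begin

text \<open>Each Bargmann kernel is, up to the factor \<open>pi powr (-1/4)\<close>, the Gaussian coherent state
  \<open>e\<^sub>u(x) = exp (-(u\<^sup>2 + x\<^sup>2)/2 + sqrt 2 u x)\<close> with \<open>u = cnj w\<close>. Completing the square and using
  the characteristic function of the standard normal distribution gives
  \<open>\<integral> e\<^sub>u e\<^sub>v = sqrt pi exp (u v)\<close> for all complex \<open>u, v\<close>. Hence every product of two kernels (and
  of a kernel with \<open>e\<^sub>z\<close>) is integrable, so \<open>sigma_n\<close> is square integrable, and integrating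
  \<open>e\<^sub>z\<close> against \<open>A\<^sub>w\<^sub>j\<close> yields \<open>pi powr (1/4) exp (z cnj w\<^sub>j) = pi powr (1/4) exp (i z (1 - 2j/n))\<close>;
  summing with the weights \<open>C\<^sub>j(n,a)\<close> gives \<open>F_n\<close>.\<close>

definition gauss_coherent :: "complex \<Rightarrow> real \<Rightarrow> complex" where
  "gauss_coherent u x =
     exp (- (u\<^sup>2 + complex_of_real x ^ 2) / 2 + complex_of_real (sqrt 2) * u * complex_of_real x)"

lemma has_bochner_integral_gaussian_iexp:
  fixes t :: real
  shows "has_bochner_integral lborel (\<lambda>u. complex_of_real (exp (- (u\<^sup>2) / 2)) * iexp (t * u))
           (complex_of_real (sqrt (2 * pi) * exp (- (t\<^sup>2) / 2)))"
proof -
  have integrable: "integrable lborel (\<lambda>u. std_normal_density u *\<^sub>R iexp (t * u))"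
    by (rule Bochner_Integration.integrable_bound[OF integrable_normal_density])
       (auto simp: norm_exp_i_times normal_density_nonneg)
  have "(LINT u|lborel. std_normal_density u *\<^sub>R iexp (t * u)) = char std_normal_distribution t"
    unfolding char_def by (rule integral_density[symmetric]) (auto simp: normal_density_nonneg)
  also have "\<dots> = complex_of_real (exp (- (t\<^sup>2) / 2))"
    by (simp add: char_std_normal_distribution)
  finally have "has_bochner_integral lborel (\<lambda>u. std_normal_density u *\<^sub>R iexp (t * u))
      (complex_of_real (exp (- (t\<^sup>2) / 2)))"
    using integrable by (simp add: has_bochner_integral_iff)
  from has_bochner_integral_mult_right[OF this, of "complex_of_real (sqrt (2 * pi))"]
  show ?thesis
    by (rule has_bochner_integral_cong[THEN iffD1, rotated -1])
       (auto simp: std_normal_density_def scaleR_conv_of_real)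
qed

text \<open>The substitution \<open>x = Re b / 2 + u / sqrt 2\<close> moves the real part of \<open>b\<close> into the centre of the
  Gaussian and leaves its imaginary part as a frequency.\<close>
lemma has_bochner_integral_gaussian_complex_linear:
  fixes b :: complex
  shows "has_bochner_integral lborel (\<lambda>x. exp (- (complex_of_real x ^ 2) + b * complex_of_real x))
           (complex_of_real (sqrt pi) * exp (b\<^sup>2 / 4))"
proof -
  define p where "p = Re b"
  define q where "q = Im b"
  have b: "b = complex_of_real p + \<i> * complex_of_real q"
    by (simp add: p_def q_def complex_eq_iff)
  define f where "f = (\<lambda>x::real. exp (- (complex_of_real x ^ 2) + b * complex_of_real x))"
  define K where "K = exp (complex_of_real (p\<^sup>2 / 4) + \<i> * complex_of_real (q * p / 2))"
  have sqrt2_sq: "sqrt 2 * sqrt 2 = (2::real)" by simp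
  have f_subst: "f (p / 2 + (1 / sqrt 2) * u) =
      K * (complex_of_real (exp (- (u\<^sup>2) / 2)) * iexp ((q / sqrt 2) * u))" for u
  proof -
    have "- (complex_of_real (p / 2 + (1 / sqrt 2) * u) ^ 2) + b * complex_of_real (p / 2 + (1 / sqrt 2) * u)
        = (complex_of_real (p\<^sup>2 / 4) + \<i> * complex_of_real (q * p / 2))
          + (complex_of_real (- (u\<^sup>2) / 2) + \<i> * complex_of_real ((q / sqrt 2) * u))"
      unfolding b by (simp add: complex_eq_iff power2_eq_square field_simps sqrt2_sq)
    then show ?thesis
      unfolding f_def K_def by (simp only: exp_add exp_of_real mult.assoc)
  qed
  have scale_nonzero: "(1 / sqrt 2 :: real) \<noteq> 0" by simp
  have subst: "has_bochner_integral lborel (\<lambda>u. f (p / 2 + (1 / sqrt 2) * u))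
      (K * complex_of_real (sqrt (2 * pi) * exp (- ((q / sqrt 2)\<^sup>2) / 2)))"
    unfolding f_subst by (rule has_bochner_integral_mult_right[OF has_bochner_integral_gaussian_iexp])
  then have "integrable lborel f"
    using lborel_integrable_real_affine_iff[OF scale_nonzero, of f "p / 2"] by (simp add: has_bochner_integral_iff)
  moreover have "integral\<^sup>L lborel f = \<bar>1 / sqrt 2\<bar> *\<^sub>R integral\<^sup>L lborel (\<lambda>u. f (p / 2 + (1 / sqrt 2) * u))"
    by (rule lborel_integral_real_affine[OF scale_nonzero])
  moreover have "\<bar>1 / sqrt 2\<bar> *\<^sub>R (K * complex_of_real (sqrt (2 * pi) * exp (- ((q / sqrt 2)\<^sup>2) / 2)))
      = complex_of_real (sqrt pi) * exp (b\<^sup>2 / 4)"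
  proof -
    have b_sq: "b\<^sup>2 / 4 = complex_of_real (p\<^sup>2 / 4) + \<i> * complex_of_real (q * p / 2)
        + complex_of_real (- ((q / sqrt 2)\<^sup>2) / 2)"
      unfolding b by (simp add: complex_eq_iff power2_eq_square field_simps sqrt2_sq)
    have scale: "\<bar>1 / sqrt 2\<bar> * sqrt (2 * pi) = sqrt pi"
      by (simp add: real_sqrt_mult)
    show ?thesis
      unfolding b_sq K_def exp_add scaleR_conv_of_real
      by (simp add: exp_of_real[symmetric] mult_ac flip: scale)
  qed
  ultimately show ?thesis
    using subst unfolding f_def has_bochner_integral_iff by simp
qed

lemma gauss_coherent_mult:
  "gauss_coherent u x * gauss_coherent v x =
     exp (- (u\<^sup>2 + v\<^sup>2) / 2) * exp (- (complex_of_real x ^ 2) + complex_of_real (sqrt 2) * (u + v) * complex_of_real x)"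
proof -
  have "(- (u\<^sup>2 + complex_of_real x ^ 2) / 2 + complex_of_real (sqrt 2) * u * complex_of_real x)
      + (- (v\<^sup>2 + complex_of_real x ^ 2) / 2 + complex_of_real (sqrt 2) * v * complex_of_real x)
      = - (u\<^sup>2 + v\<^sup>2) / 2 + (- (complex_of_real x ^ 2) + complex_of_real (sqrt 2) * (u + v) * complex_of_real x)"
    by (simp add: field_simps)
  then show ?thesis
    unfolding gauss_coherent_def by (metis exp_add)
qed

lemma has_bochner_integral_gauss_coherent_mult:
  "has_bochner_integral lborel (\<lambda>x. gauss_coherent u x * gauss_coherent v x)
     (complex_of_real (sqrt pi) * exp (u * v))"
proof -
  have "(complex_of_real (sqrt 2))\<^sup>2 = 2"
    by (simp flip: of_real_power)
  then have "- (u\<^sup>2 + v\<^sup>2) / 2 + (complex_of_real (sqrt 2) * (u + v))\<^sup>2 / 4 = u * v"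
    by (simp add: power_mult_distrib power2_eq_square field_simps)
  then have integral_eq: "exp (- (u\<^sup>2 + v\<^sup>2) / 2) * (complex_of_real (sqrt pi) * exp ((complex_of_real (sqrt 2) * (u + v))\<^sup>2 / 4))
      = complex_of_real (sqrt pi) * exp (u * v)"
    by (metis exp_add mult.left_commute)
  show ?thesis
    unfolding gauss_coherent_mult
    using has_bochner_integral_mult_right[OF has_bochner_integral_gaussian_complex_linear,
      of "exp (- (u\<^sup>2 + v\<^sup>2) / 2)" "complex_of_real (sqrt 2) * (u + v)", unfolded integral_eq] .
qed

lemma bargmann_kernel_eq_gauss_coherent:
  "bargmann_kernel w x = complex_of_real (pi powr (-1/4)) * gauss_coherent (cnj w) x"
  unfolding bargmann_kernel_def gauss_coherent_def by simp

lemma cnj_bargmann_kernel: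
  "cnj (bargmann_kernel w x) = complex_of_real (pi powr (-1/4)) * gauss_coherent w x"
  unfolding bargmann_kernel_def gauss_coherent_def by (simp add: exp_cnj)

lemma integrable_bargmann_kernel_mult_cnj:
  "integrable lborel (\<lambda>x. bargmann_kernel w x * cnj (bargmann_kernel v x))"
proof -
  have "integrable lborel (\<lambda>x. complex_of_real (pi powr (-1/4)) * complex_of_real (pi powr (-1/4))
      * (gauss_coherent (cnj w) x * gauss_coherent v x))"
    by (intro integrable_mult_right integrable.intros[OF has_bochner_integral_gauss_coherent_mult])
  then show ?thesis
    unfolding cnj_bargmann_kernel unfolding bargmann_kernel_eq_gauss_coherent by (simp add: mult_ac)
qed

lemma square_integrable_sum_bargmann_kernel:
  fixes c :: "'i \<Rightarrow> complex" and w :: "'i \<Rightarrow> complex"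
  shows "integrable lborel (\<lambda>x. (cmod (\<Sum>j\<in>S. c j * bargmann_kernel (w j) x))\<^sup>2)"
proof -
  have "complex_of_real ((cmod (\<Sum>j\<in>S. c j * bargmann_kernel (w j) x))\<^sup>2) =
      (\<Sum>j\<in>S. \<Sum>k\<in>S. c j * cnj (c k) * (bargmann_kernel (w j) x * cnj (bargmann_kernel (w k) x)))" for x
    unfolding complex_norm_square cnj_sum sum_product by (simp add: mult_ac)
  moreover have "integrable lborel (\<lambda>x. \<Sum>j\<in>S. \<Sum>k\<in>S.
      c j * cnj (c k) * (bargmann_kernel (w j) x * cnj (bargmann_kernel (w k) x)))"
    by (intro Bochner_Integration.integrable_sum integrable_mult_right integrable_bargmann_kernel_mult_cnj)
  ultimately show ?thesis
    using integrable_Re by (metis (no_types, lifting) Re_complex_of_real ext)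
qed

lemma has_bochner_integral_gauss_coherent_mult_bargmann_kernel:
  "has_bochner_integral lborel (\<lambda>x. gauss_coherent z x * bargmann_kernel w x)
     (complex_of_real (pi powr (1/4)) * exp (z * cnj w))"
proof -
  have "pi powr (-1/4) * sqrt pi = pi powr (1/4)"
    by (simp add: powr_half_sqrt[symmetric] powr_add[symmetric])
  then have integral_eq: "complex_of_real (pi powr (-1/4)) * (complex_of_real (sqrt pi) * exp (z * cnj w))
      = complex_of_real (pi powr (1/4)) * exp (z * cnj w)"
    by (metis mult.assoc of_real_mult)
  have "(\<lambda>x. gauss_coherent z x * bargmann_kernel w x) =
      (\<lambda>x. complex_of_real (pi powr (-1/4)) * (gauss_coherent z x * gauss_coherent (cnj w) x))"
    unfolding bargmann_kernel_eq_gauss_coherent by (simp add: mult_ac)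
  then show ?thesis
    using has_bochner_integral_mult_right[OF has_bochner_integral_gauss_coherent_mult,
      of "complex_of_real (pi powr (-1/4))" z "cnj w", unfolded integral_eq] by simp
qed

lemma has_bochner_integral_gauss_coherent_mult_sum_bargmann_kernel:
  fixes c :: "'i \<Rightarrow> complex" and w :: "'i \<Rightarrow> complex"
  shows "has_bochner_integral lborel (\<lambda>x. gauss_coherent z x * (\<Sum>j\<in>S. c j * bargmann_kernel (w j) x))
     (complex_of_real (pi powr (1/4)) * (\<Sum>j\<in>S. c j * exp (z * cnj (w j))))"
proof -
  have "has_bochner_integral lborel (\<lambda>x. \<Sum>j\<in>S. c j * (gauss_coherent z x * bargmann_kernel (w j) x))
      (\<Sum>j\<in>S. c j * (complex_of_real (pi powr (1/4)) * exp (z * cnj (w j))))"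
    by (intro has_bochner_integral_sum has_bochner_integral_mult_right
        has_bochner_integral_gauss_coherent_mult_bargmann_kernel)
  then show ?thesis
    by (simp add: sum_distrib_left mult_ac)
qed

lemma F_n_eq_sum_exp_cnj_wpt:
  "F_n n z a = (\<Sum>j=0..n. complex_of_real (coeffC n a j) * exp (z * cnj (wpt n j)))"
  unfolding F_n_def wpt_def by (simp add: mult_ac)

text \<open>The hypotheses \<open>a > 1\<close> and \<open>n \<ge> 1\<close> are not needed: the identity holds for every real \<open>a\<close>,
  and for \<open>n = 0\<close> the junk value \<open>j / 0 = 0\<close> is used consistently on both sides.\<close>
theorem corollary4p4:
  fixes a :: real and n :: nat
  assumes "a > 1" and "n \<ge> 1"
  shows "sigma_n n a \<in> borel_measurable lborel
         \<and> integrable lborel (\<lambda>x. (cmod (sigma_n n a x))\<^sup>2)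
         \<and> (\<forall>z::complex.
              integrable lborel (\<lambda>x. exp (- (z\<^sup>2 + complex_of_real x ^ 2) / 2
                     + complex_of_real (sqrt 2) * z * complex_of_real x) * sigma_n n a x)
            \<and> F_n n z a = complex_of_real (pi powr (-1/4)) *
                 (LINT x|lborel. exp (- (z\<^sup>2 + complex_of_real x ^ 2) / 2
                     + complex_of_real (sqrt 2) * z * complex_of_real x) * sigma_n n a x))"
proof -
  have measurable: "sigma_n n a \<in> borel_measurable lborel"
    unfolding sigma_n_def bargmann_kernel_def measurable_lborel2
    by (rule borel_measurable_continuous_onI) (auto intro!: continuous_intros)
  have square_integrable: "integrable lborel (\<lambda>x. (cmod (sigma_n n a x))\<^sup>2)"
    unfolding sigma_n_def by (rule square_integrable_sum_bargmann_kernel)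
  have transform: "has_bochner_integral lborel (\<lambda>x. gauss_coherent z x * sigma_n n a x)
      (complex_of_real (pi powr (1/4)) * F_n n z a)" for z
    unfolding sigma_n_def F_n_eq_sum_exp_cnj_wpt
    by (rule has_bochner_integral_gauss_coherent_mult_sum_bargmann_kernel)
  have "pi powr (-1/4) * pi powr (1/4) = 1"
    by (simp add: powr_add[symmetric])
  then have "F_n n z a = complex_of_real (pi powr (-1/4)) * (LINT x|lborel. gauss_coherent z x * sigma_n n a x)" for z
    using transform[of z] by (simp add: has_bochner_integral_iff mult.assoc flip: of_real_mult)
  with measurable square_integrable transform show ?thesis
    unfolding gauss_coherent_def has_bochner_integral_iff by blast
qed

end
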